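(* Let $\gamma>0$, $\lambda_k\coloneqq-\gamma+ik$ for $k\in\mathbb{N}$, and let $A$ be the diagonal operator on $\ell^2$ given by $A(\zeta_k)=(\lambda_k\zeta_k)$ with domain $D(A)=\{(\zeta_k)\in\ell^2:(\lambda_k\zeta_k)\in\ell^2\}$. Let $A_d\coloneqq(I+A)(I-A)^{-1}$. Then for every $0<\alpha\le1$, \[ \liminf_{n\to\infty}n^{\alpha}\big\|A_d^{\,n^2}(-A)^{-\alpha}\big\|\ge e^{-2\gamma}, \] and moreover there exist $M>0$ and $n_0\in\mathbb{N}$ such that $\|A_d^{\,n}A^{-1}\|\le M/\sqrt{n}$ for all $n\ge n_0$.
   Context: For this diagonal operator, $A_d^{\,n}(-A)^{-\alpha}$ is the diagonal operator with entries $\big(\frac{1+\lambda_k}{1-\lambda_k}\big)^n(-\lambda_k)^{-\alpha}$ (principal branch). *)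

theory Defs
  imports "HOL-Analysis.Analysis"
begin

definition l2 :: "(nat \<Rightarrow> complex) set" where
  "l2 = {z. summable (\<lambda>k. (cmod (z k))\<^sup>2)}"

definition l2norm :: "(nat \<Rightarrow> complex) \<Rightarrow> real" where
  "l2norm z = sqrt (\<Sum>k. (cmod (z k))\<^sup>2)"

definition diag_opnorm :: "(nat \<Rightarrow> complex) \<Rightarrow> real" where
  "diag_opnorm d = (SUP z \<in> {z \<in> l2. l2norm z \<le> 1}. l2norm (\<lambda>k. d k * z k))"

definition lam :: "real \<Rightarrow> nat \<Rightarrow> complex" where
  "lam \<gamma> k = complex_of_real (- \<gamma>) + \<i> * of_nat k"

definition Ad_entry :: "real \<Rightarrow> nat \<Rightarrow> complex" where
  "Ad_entry \<gamma> k = (1 + lam \<gamma> k) / (1 - lam \<gamma> k)"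

end

theory Submission
  imports Defs "HOL-Real_Asymp.Real_Asymp"
begin

text \<open>
  Since |1 - \<lambda>_k|^2 - |1 + \<lambda>_k|^2 = 4\<gamma>, the entries of A_d satisfy
  |(A_d)_k|^2 = 1 - 4\<gamma>/b_k with b_k = (1 + \<gamma>)^2 + k^2, and the norm of a diagonal operator
  is the supremum of the moduli of its entries. For the lower bound, test at the index k = n:
  there |(A_d)_n|^(2n^2) \<ge> (1 + 4\<gamma>/n^2)^(-n^2) \<ge> exp(-4\<gamma>), while n^\<alpha> |\<lambda>_n|^(-\<alpha>) \<rightarrow> 1.
  For the upper bound, |(A_d)_k|^(2n) \<le> exp(-4\<gamma>n/b_k) \<le> b_k/(b_k + 4\<gamma>n) \<le> b_k/(4\<gamma>n),
  and b_k/|\<lambda>_k|^2 \<le> (1 + \<gamma>)^2/\<gamma>^2 uniformly in k.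
\<close>

lemma l2norm_diag_le:
  fixes d z :: "nat \<Rightarrow> complex" and B :: real
  assumes bound: "\<And>k. cmod (d k) \<le> B" and z: "z \<in> l2" "l2norm z \<le> 1"
  shows "l2norm (\<lambda>k. d k * z k) \<le> B"
proof -
  have B_nonneg: "0 \<le> B" using bound[of 0] norm_ge_zero order_trans by blast
  have summable_z: "summable (\<lambda>k. (cmod (z k))\<^sup>2)" using z by (simp add: l2_def)
  have termwise: "(cmod (d k * z k))\<^sup>2 \<le> B\<^sup>2 * (cmod (z k))\<^sup>2" for k
    by (simp add: norm_mult power_mult_distrib bound mult_right_mono power_mono)
  have summable_dz: "summable (\<lambda>k. (cmod (d k * z k))\<^sup>2)"
    by (rule summable_comparison_test'[where g="\<lambda>k. B\<^sup>2 * (cmod (z k))\<^sup>2"])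
       (use summable_z termwise in auto)
  have sum_z_le: "(\<Sum>k. (cmod (z k))\<^sup>2) \<le> 1"
    using z suminf_nonneg[OF summable_z] by (simp add: l2norm_def)
  have "(\<Sum>k. (cmod (d k * z k))\<^sup>2) \<le> (\<Sum>k. B\<^sup>2 * (cmod (z k))\<^sup>2)"
    by (rule suminf_le) (use summable_z summable_dz termwise in auto)
  also have "\<dots> = B\<^sup>2 * (\<Sum>k. (cmod (z k))\<^sup>2)" using summable_z by (rule suminf_mult)
  also have "\<dots> \<le> B\<^sup>2" using sum_z_le by (simp add: mult_left_le)
  finally show ?thesis
    unfolding l2norm_def using B_nonneg real_sqrt_le_mono[of _ "B\<^sup>2"] by fastforce
qed

lemma diag_opnorm_le:
  fixes d :: "nat \<Rightarrow> complex"
  assumes "\<And>k. cmod (d k) \<le> B"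
  shows "diag_opnorm d \<le> B"
proof -
  have "(\<lambda>_. 0) \<in> {z \<in> l2. l2norm z \<le> 1}" by (simp add: l2_def l2norm_def)
  then show ?thesis
    unfolding diag_opnorm_def by (intro cSUP_least) (use l2norm_diag_le assms in auto)
qed

lemma norm_le_diag_opnorm:
  fixes d :: "nat \<Rightarrow> complex"
  assumes bound: "\<And>k. cmod (d k) \<le> B"
  shows "cmod (d j) \<le> diag_opnorm d"
proof -
  define e where "e k = (if k = j then 1 else 0 :: complex)" for k
  have l2norm_diag_e: "l2norm (\<lambda>k. c k * e k) = cmod (c j)" for c :: "nat \<Rightarrow> complex"
  proof -
    have "(\<lambda>k. (cmod (c k * e k))\<^sup>2) = (\<lambda>k. if k = j then (cmod (c j))\<^sup>2 else 0)"
      by (auto simp: e_def)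
    then show ?thesis
      unfolding l2norm_def using sums_single[of j "\<lambda>_. (cmod (c j))\<^sup>2"] by (simp add: sums_iff)
  qed
  have "(\<lambda>k. (cmod (e k))\<^sup>2) = (\<lambda>k. if k = j then 1 else 0)" by (auto simp: e_def)
  then have "e \<in> l2" unfolding l2_def using summable_single[of j "\<lambda>_. 1::real"] by simp
  moreover have "l2norm e = 1" using l2norm_diag_e[of "\<lambda>_. 1"] by simp
  ultimately have "l2norm (\<lambda>k. d k * e k) \<le> diag_opnorm d"
    unfolding diag_opnorm_def
    by (intro cSUP_upper) (use l2norm_diag_le[OF bound] in \<open>auto intro!: bdd_aboveI2\<close>)
  then show ?thesis by (simp add: l2norm_diag_e)
qed

lemma norm_lam_squared: "(cmod (lam g k))\<^sup>2 = g\<^sup>2 + (real k)\<^sup>2"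
  by (simp add: lam_def cmod_power2)

lemma norm_lam_ge: "g > 0 \<Longrightarrow> g \<le> cmod (lam g k)"
  by (rule power2_le_imp_le[OF _ norm_ge_zero]) (simp add: norm_lam_squared)

lemma norm_Ad_entry_squared:
  "(cmod (Ad_entry g k))\<^sup>2 = ((1 - g)\<^sup>2 + (real k)\<^sup>2) / ((1 + g)\<^sup>2 + (real k)\<^sup>2)"
proof -
  have "(cmod (1 + lam g k))\<^sup>2 = (1 - g)\<^sup>2 + (real k)\<^sup>2" by (simp add: lam_def cmod_power2)
  moreover have "(cmod (1 - lam g k))\<^sup>2 = (1 + g)\<^sup>2 + (real k)\<^sup>2" by (simp add: lam_def cmod_power2)
  ultimately show ?thesis unfolding Ad_entry_def norm_divide power_divide by simp
qed

lemma norm_Ad_entry_le_one: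
  assumes "g > 0"
  shows "cmod (Ad_entry g k) \<le> 1"
proof -
  have "(1 - g)\<^sup>2 \<le> (1 + g)\<^sup>2" using assms by (simp add: power2_eq_square algebra_simps)
  moreover have "(1 + g)\<^sup>2 + (real k)\<^sup>2 > 0" using assms by (intro add_pos_nonneg) auto
  ultimately have "(cmod (Ad_entry g k))\<^sup>2 \<le> 1\<^sup>2" by (simp add: norm_Ad_entry_squared)
  then show ?thesis by (rule power2_le_imp_le) simp
qed

lemma power_square_swap: "((x::'a::monoid_mult) ^ m)\<^sup>2 = (x\<^sup>2) ^ m"
  by (metis power_mult mult.commute)

lemma exp_le_norm_Ad_entry_power_square:
  assumes g: "g > 0" and n: "n \<ge> 1"
  shows "exp (-2 * g) \<le> cmod (Ad_entry g n) ^ (n\<^sup>2)"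
proof -
  define a where "a = (1 - g)\<^sup>2 + (real n)\<^sup>2"
  define b where "b = (1 + g)\<^sup>2 + (real n)\<^sup>2"
  have a_ge: "real (n\<^sup>2) \<le> a" and a_pos: "a > 0" and b_pos: "b > 0"
    using n g unfolding a_def b_def by (auto intro: add_nonneg_pos)
  have "b / a = 1 + 4 * g / a"
    using a_pos unfolding a_def b_def by (simp add: field_simps power2_eq_square)
  then have "(b / a) ^ (n\<^sup>2) \<le> exp (4 * g / a) ^ (n\<^sup>2)"
    using a_pos g by (intro power_mono) (auto simp: add_sign_intros)
  also have "\<dots> = exp (real (n\<^sup>2) / a * (4 * g))" by (simp add: exp_of_nat_mult[symmetric])
  also have "\<dots> \<le> exp (4 * g)"
    using mult_right_mono[OF a_ge, of "4 * g"] a_pos g by (simp add: pos_divide_le_eq)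
  finally have "(b / a) ^ (n\<^sup>2) \<le> exp (4 * g)" .
  then have "inverse (exp (4 * g)) \<le> inverse ((b / a) ^ (n\<^sup>2))"
    using a_pos b_pos by (intro le_imp_inverse_le) auto
  also have "\<dots> = (cmod (Ad_entry g n) ^ (n\<^sup>2))\<^sup>2"
    by (simp add: power_square_swap norm_Ad_entry_squared a_def b_def power_inverse[symmetric])
  finally have "(exp (-2 * g))\<^sup>2 \<le> (cmod (Ad_entry g n) ^ (n\<^sup>2))\<^sup>2"
    by (simp add: exp_minus[symmetric] power2_eq_square exp_add[symmetric])
  then show ?thesis by (rule power2_le_imp_le) simp
qed

lemma norm_Ad_entry_power_squared_le:
  fixes g :: real and k n :: nat
  assumes "g > 0"
  defines "b \<equiv> (1 + g)\<^sup>2 + (real k)\<^sup>2"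
  shows "(cmod (Ad_entry g k) ^ n)\<^sup>2 \<le> b / (b + 4 * g * real n)"
proof -
  have b_pos: "b > 0" using assms by (auto intro: add_pos_nonneg)
  have "(cmod (Ad_entry g k))\<^sup>2 = 1 - 4 * g / b"
    using b_pos unfolding norm_Ad_entry_squared b_def by (simp add: field_simps power2_eq_square)
  then have "(cmod (Ad_entry g k))\<^sup>2 \<le> exp (- (4 * g / b))"
    using exp_ge_add_one_self[of "- (4 * g / b)"] by simp
  then have "(cmod (Ad_entry g k) ^ n)\<^sup>2 \<le> exp (- (4 * g / b)) ^ n"
    unfolding power_square_swap by (intro power_mono) auto
  also have "\<dots> = inverse (exp (real n * (4 * g / b)))"
    by (simp only: exp_minus exp_of_nat_mult power_inverse)
  also have "\<dots> \<le> inverse (1 + real n * (4 * g / b))"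
    using assms b_pos by (intro le_imp_inverse_le) (auto intro!: add_pos_nonneg)
  also have "\<dots> = b / (b + 4 * g * real n)" using b_pos by (simp add: field_simps)
  finally show ?thesis .
qed

lemma norm_Ad_entry_power_div_lam_squared_le:
  assumes g: "g > 0"
  shows "(cmod (Ad_entry g k ^ n * inverse (lam g k)))\<^sup>2 * real n \<le> (1 + g)\<^sup>2 / (4 * g ^ 3)"
proof -
  define b where "b = (1 + g)\<^sup>2 + (real k)\<^sup>2"
  define t where "t = g\<^sup>2 + (real k)\<^sup>2"
  have b_pos: "b > 0" and t_pos: "t > 0"
    using g unfolding b_def t_def by (auto intro: add_pos_nonneg)
  have "(cmod (Ad_entry g k ^ n * inverse (lam g k)))\<^sup>2 * real n
        = (cmod (Ad_entry g k) ^ n)\<^sup>2 * real n / t"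
    by (simp add: norm_mult norm_power norm_inverse power_mult_distrib power_inverse
        norm_lam_squared t_def divide_inverse)
  also have "\<dots> \<le> b / (b + 4 * g * real n) * real n / t"
    using norm_Ad_entry_power_squared_le[OF g, of k n] t_pos
    by (intro divide_right_mono mult_right_mono) (auto simp: b_def)
  also have "\<dots> \<le> b / (4 * g) / t"
  proof -
    have "b * (4 * g * real n) \<le> b * (b + 4 * g * real n)"
      using b_pos by (intro mult_left_mono) auto
    then have "b / (b + 4 * g * real n) * real n \<le> b / (4 * g)"
      using b_pos g by (simp add: field_simps add_pos_nonneg)
    then show ?thesis using t_pos by (intro divide_right_mono) auto
  qed
  also have "\<dots> \<le> (1 + g)\<^sup>2 / (4 * g ^ 3)"
  proof -
    have "b * g\<^sup>2 \<le> (1 + g)\<^sup>2 * t"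
      using g unfolding b_def t_def by (simp add: algebra_simps power2_eq_square)
    then show ?thesis using g t_pos by (simp add: field_simps power2_eq_square power3_eq_cube)
  qed
  finally show ?thesis .
qed

lemma index_div_norm_lam_powr_tendsto_one:
  "(\<lambda>n::nat. (real n / cmod (lam g n)) powr a) \<longlonglongrightarrow> 1"
proof -
  have "cmod (lam g n) = sqrt (g\<^sup>2 + (real n)\<^sup>2)" for n
    by (metis norm_lam_squared norm_ge_zero real_sqrt_unique)
  moreover have "(\<lambda>n::nat. real n / sqrt (g\<^sup>2 + (real n)\<^sup>2)) \<longlonglongrightarrow> 1" by real_asymp
  ultimately show ?thesis using tendsto_powr[OF _ tendsto_const, of _ 1 sequentially a] by simp
qed

lemma Liminf_Ad_square_power_fractional_ge:
  assumes g: "\<gamma> > 0" and \<alpha>: "0 < \<alpha>" "\<alpha> \<le> 1"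
  shows "Liminf sequentially (\<lambda>n::nat. ereal (real n powr \<alpha> *
           diag_opnorm (\<lambda>k. Ad_entry \<gamma> k ^ (n\<^sup>2) * (- lam \<gamma> k) powr (- complex_of_real \<alpha>))))
         \<ge> ereal (exp (- 2 * \<gamma>))"
proof -
  define d where "d n k = Ad_entry \<gamma> k ^ (n\<^sup>2) * (- lam \<gamma> k) powr (- complex_of_real \<alpha>)"
    for n k
  define h where "h n = exp (-2 * \<gamma>) * (real n / cmod (lam \<gamma> n)) powr \<alpha>" for n
  have lam_pos: "cmod (lam \<gamma> k) > 0" for k using norm_lam_ge[OF g, of k] g by linarith
  have norm_d: "cmod (d n k) = cmod (Ad_entry \<gamma> k) ^ (n\<^sup>2) * cmod (lam \<gamma> k) powr (- \<alpha>)" for n k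
    unfolding d_def by (subst norm_mult, subst norm_powr_real_powr') (auto simp: norm_power)
  have bound: "cmod (d n k) \<le> \<gamma> powr (- \<alpha>)" for n k
  proof -
    have "cmod (d n k) \<le> 1 * cmod (lam \<gamma> k) powr (- \<alpha>)"
      unfolding norm_d
      by (intro mult_right_mono) (auto simp: power_le_one norm_Ad_entry_le_one[OF g])
    also have "\<dots> \<le> \<gamma> powr (- \<alpha>)"
      using norm_lam_ge[OF g, of k] g \<alpha> lam_pos[of k]
      by (simp add: powr_minus_divide powr_mono2 divide_left_mono)
    finally show ?thesis .
  qed
  have h_below: "eventually (\<lambda>n. ereal (h n) \<le> ereal (real n powr \<alpha> * diag_opnorm (d n)))
                   sequentially"
    using eventually_ge_at_top[of 1]
  proof eventually_elim
    case (elim n)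
    have "h n = real n powr \<alpha> * exp (-2 * \<gamma>) * cmod (lam \<gamma> n) powr (- \<alpha>)"
      unfolding h_def using lam_pos[of n] by (simp add: powr_divide powr_minus_divide)
    also have "\<dots> \<le> real n powr \<alpha> * cmod (d n n)"
      unfolding norm_d mult.assoc
      using exp_le_norm_Ad_entry_power_square[OF g elim]
      by (intro mult_left_mono mult_right_mono) auto
    also have "\<dots> \<le> real n powr \<alpha> * diag_opnorm (d n)"
      by (intro mult_left_mono norm_le_diag_opnorm[OF bound]) auto
    finally show ?case by simp
  qed
  have "(\<lambda>n. ereal (h n)) \<longlonglongrightarrow> ereal (exp (-2 * \<gamma>) * 1)"
    unfolding h_def by (intro tendsto_intros index_div_norm_lam_powr_tendsto_one)
  then have "Liminf sequentially (\<lambda>n. ereal (h n)) = ereal (exp (-2 * \<gamma>))"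
    by (simp add: lim_imp_Liminf)
  with Liminf_mono[OF h_below] show ?thesis unfolding d_def by simp
qed

lemma diag_opnorm_Ad_power_inverse_le:
  assumes g: "\<gamma> > 0" and n: "n \<ge> 1"
  shows "diag_opnorm (\<lambda>k. Ad_entry \<gamma> k ^ n * inverse (lam \<gamma> k))
         \<le> sqrt ((1 + \<gamma>)\<^sup>2 / (4 * \<gamma> ^ 3)) / sqrt (real n)"
proof (rule diag_opnorm_le)
  fix k
  have "cmod (Ad_entry \<gamma> k ^ n * inverse (lam \<gamma> k)) * sqrt (real n)
        = sqrt ((cmod (Ad_entry \<gamma> k ^ n * inverse (lam \<gamma> k)))\<^sup>2 * real n)"
    by (simp add: real_sqrt_mult)
  also have "\<dots> \<le> sqrt ((1 + \<gamma>)\<^sup>2 / (4 * \<gamma> ^ 3))"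
    using norm_Ad_entry_power_div_lam_squared_le[OF g] by (rule real_sqrt_le_mono)
  finally show "cmod (Ad_entry \<gamma> k ^ n * inverse (lam \<gamma> k))
                \<le> sqrt ((1 + \<gamma>)\<^sup>2 / (4 * \<gamma> ^ 3)) / sqrt (real n)"
    using n by (simp add: field_simps)
qed

theorem mainTheorem9:
  fixes \<gamma> :: real
  assumes "\<gamma> > 0"
  shows "(\<forall>\<alpha>::real. 0 < \<alpha> \<and> \<alpha> \<le> 1 \<longrightarrow>
           Liminf sequentially (\<lambda>n::nat. ereal (real n powr \<alpha> *
              diag_opnorm (\<lambda>k. Ad_entry \<gamma> k ^ (n\<^sup>2) * (- lam \<gamma> k) powr (- complex_of_real \<alpha>))))
           \<ge> ereal (exp (- 2 * \<gamma>)))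
       \<and> (\<exists>M::real. M > 0 \<and> (\<exists>n0::nat. \<forall>n\<ge>n0.
           diag_opnorm (\<lambda>k. Ad_entry \<gamma> k ^ n * inverse (lam \<gamma> k)) \<le> M / sqrt (real n)))"
proof (intro conjI allI impI exI)
  show "Liminf sequentially (\<lambda>n::nat. ereal (real n powr \<alpha> *
          diag_opnorm (\<lambda>k. Ad_entry \<gamma> k ^ (n\<^sup>2) * (- lam \<gamma> k) powr (- complex_of_real \<alpha>))))
        \<ge> ereal (exp (- 2 * \<gamma>))" if "0 < \<alpha> \<and> \<alpha> \<le> 1" for \<alpha>
    using Liminf_Ad_square_power_fractional_ge[OF assms] that by blast
  show "sqrt ((1 + \<gamma>)\<^sup>2 / (4 * \<gamma> ^ 3)) > 0" using assms by simp
  show "diag_opnorm (\<lambda>k. Ad_entry \<gamma> k ^ n * inverse (lam \<gamma> k))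
        \<le> sqrt ((1 + \<gamma>)\<^sup>2 / (4 * \<gamma> ^ 3)) / sqrt (real n)" if "n \<ge> 1" for n
    using diag_opnorm_Ad_power_inverse_le[OF assms that] .
qed

end
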